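(* Let $k$ be a positive integer and let $w_{n,k}$ denote the number of words $w_1\cdots w_n$ with all $w_i\in[n]$ containing no strictly decreasing subsequence of length $k+1$. Then for all positive integers $n,m$, $w_{n,k}\cdot w_{m,k}\le w_{n+m,k}$.
   Context: $[n]=\{1,\dots,n\}$. *)

theory Defs
  imports Main
begin

definition has_strict_dec_subseq :: "nat list \<Rightarrow> nat \<Rightarrow> bool" where
  "has_strict_dec_subseq w l \<longleftrightarrow>
     (\<exists>idx :: nat \<Rightarrow> nat.
        (\<forall>j<l. idx j < length w) \<and>
        (\<forall>j. Suc j < l \<longrightarrow> idx j < idx (Suc j) \<and> w ! idx j > w ! idx (Suc j)))"

definition w_count :: "nat \<Rightarrow> nat \<Rightarrow> nat" where
  "w_count n k = card {w :: nat list. length w = n \<and> set w \<subseteq> {1..n} \<and>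
                          \<not> has_strict_dec_subseq w (k + 1)}"

end

theory Submission
  imports Defs
begin

text \<open>Concatenate a word \<open>u\<close> over \<open>[n]\<close> with a word \<open>v\<close> over \<open>[m]\<close> shifted up by \<open>n\<close>.
  Every letter of \<open>u\<close> is then at most every letter of the shifted \<open>v\<close>, so a strictly
  decreasing subsequence of the concatenation cannot use letters of both parts: it lies in \<open>u\<close>
  or in the shifted \<open>v\<close>, and shifting preserves strict decrease. Hence the concatenation
  maps pairs of avoiding words of lengths \<open>n\<close> and \<open>m\<close> injectively to avoiding words of
  length \<open>n + m\<close>.\<close>

lemma has_strict_dec_subseq_mapD:
  assumes "mono f" and "has_strict_dec_subseq (map f w) l"
  shows "has_strict_dec_subseq w l"
proof -
  obtain idx where bound: "\<forall>j<l. idx j < length w"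
    and step: "\<forall>j. Suc j < l \<longrightarrow> idx j < idx (Suc j) \<and> f (w ! idx j) > f (w ! idx (Suc j))"
    using assms(2) unfolding has_strict_dec_subseq_def by auto
  have "f x > f y \<Longrightarrow> x > y" for x y
    using \<open>mono f\<close> by (meson monoD not_le)
  then show ?thesis
    unfolding has_strict_dec_subseq_def using bound step by blast
qed

lemma has_strict_dec_subseq_appendD:
  assumes le: "\<forall>x\<in>set xs. \<forall>y\<in>set ys. x \<le> y"
    and "has_strict_dec_subseq (xs @ ys) l"
  shows "has_strict_dec_subseq xs l \<or> has_strict_dec_subseq ys l"
proof -
  let ?w = "xs @ ys"
  obtain idx where bound: "\<And>j. j < l \<Longrightarrow> idx j < length ?w"
    and step: "\<And>j. Suc j < l \<Longrightarrow> idx j < idx (Suc j) \<and> ?w ! idx j > ?w ! idx (Suc j)"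
    using assms(2) unfolding has_strict_dec_subseq_def by blast
  have no_cross: "idx j < length xs \<longleftrightarrow> idx (Suc j) < length xs" if "Suc j < l" for j
  proof
    assume j: "idx j < length xs"
    show "idx (Suc j) < length xs"
    proof (rule ccontr)
      assume "\<not> idx (Suc j) < length xs"
      then have "?w ! idx (Suc j) \<in> set ys"
        using bound[of "Suc j"] that by (simp add: nth_append)
      moreover have "?w ! idx j \<in> set xs"
        using j by (simp add: nth_append)
      ultimately show False
        using le step[OF that] by fastforce
    qed
  qed (use step[OF that] in auto)
  have same_side: "idx j < length xs \<longleftrightarrow> idx 0 < length xs" if "j < l" for j
    using that by (induction j) (simp_all add: no_cross)
  show ?thesis
  proof (cases "idx 0 < length xs")
    case True
    then have "has_strict_dec_subseq xs l"
      unfolding has_strict_dec_subseq_def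
      using bound step same_side by (intro exI[of _ idx]) (auto simp: nth_append)
    then show ?thesis ..
  next
    case False
    then have "has_strict_dec_subseq ys l"
      unfolding has_strict_dec_subseq_def
    proof (intro exI[of _ "\<lambda>j. idx j - length xs"] conjI allI impI)
      fix j assume "j < l"
      then show "idx j - length xs < length ys"
        using bound[of j] same_side[of j] False by simp
    next
      fix j assume j: "Suc j < l"
      then have "length xs \<le> idx j" "length xs \<le> idx (Suc j)"
        using same_side[of j] same_side[of "Suc j"] False by auto
      moreover have "idx j < idx (Suc j)" and "?w ! idx j > ?w ! idx (Suc j)"
        using step[OF j] by auto
      ultimately show "idx j - length xs < idx (Suc j) - length xs"
        and "ys ! (idx j - length xs) > ys ! (idx (Suc j) - length xs)"
        by (simp_all add: nth_append not_less)
    qed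
    then show ?thesis ..
  qed
qed

definition avoiding_words :: "nat \<Rightarrow> nat \<Rightarrow> nat list set" where
  "avoiding_words n k =
     {w. length w = n \<and> set w \<subseteq> {1..n} \<and> \<not> has_strict_dec_subseq w (k + 1)}"

lemma w_count_eq_card_avoiding_words: "w_count n k = card (avoiding_words n k)"
  unfolding w_count_def avoiding_words_def ..

lemma finite_avoiding_words: "finite (avoiding_words n k)"
proof (rule finite_subset)
  show "avoiding_words n k \<subseteq> {w. set w \<subseteq> {1..n} \<and> length w = n}"
    unfolding avoiding_words_def by blast
  show "finite {w :: nat list. set w \<subseteq> {1..n} \<and> length w = n}"
    by (rule finite_lists_length_eq) simp
qed

lemma append_shift_mem_avoiding_words:
  assumes "u \<in> avoiding_words n k" and "v \<in> avoiding_words m k"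
  shows "u @ map ((+) n) v \<in> avoiding_words (n + m) k"
proof -
  have u: "length u = n" "set u \<subseteq> {1..n}" "\<not> has_strict_dec_subseq u (k + 1)"
    and v: "length v = m" "set v \<subseteq> {1..m}" "\<not> has_strict_dec_subseq v (k + 1)"
    using assms unfolding avoiding_words_def by auto
  have "mono ((+) n)"
    by (rule monoI) simp
  then have "\<not> has_strict_dec_subseq (map ((+) n) v) (k + 1)"
    using v(3) has_strict_dec_subseq_mapD by blast
  moreover have "\<forall>x\<in>set u. \<forall>y\<in>set (map ((+) n) v). x \<le> y"
    using u(2) by auto
  ultimately have "\<not> has_strict_dec_subseq (u @ map ((+) n) v) (k + 1)"
    using u(3) has_strict_dec_subseq_appendD by blast
  moreover have "set (u @ map ((+) n) v) \<subseteq> {1..n + m}"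
    using u(2) v(2) by auto
  ultimately show ?thesis
    using u(1) v(1) unfolding avoiding_words_def mem_Collect_eq length_append length_map
    by blast
qed

lemma inj_on_append_shift:
  "inj_on (\<lambda>(u, v). u @ map ((+) n) v) ({u :: nat list. length u = n} \<times> UNIV)"
proof (rule inj_onI)
  fix p q :: "nat list \<times> nat list"
  assume "p \<in> {u. length u = n} \<times> UNIV" "q \<in> {u. length u = n} \<times> UNIV"
    and "(\<lambda>(u, v). u @ map ((+) n) v) p = (\<lambda>(u, v). u @ map ((+) n) v) q"
  then show "p = q"
    by (cases p, cases q) (simp add: inj_map_eq_map)
qed

theorem lemma3p5:
  fixes k n m :: nat
  assumes "k \<ge> 1" and "n \<ge> 1" and "m \<ge> 1"
  shows "w_count n k * w_count m k \<le> w_count (n + m) k"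
proof -
  have "avoiding_words n k \<times> avoiding_words m k \<subseteq> {u. length u = n} \<times> UNIV"
    unfolding avoiding_words_def by blast
  then have "inj_on (\<lambda>(u, v). u @ map ((+) n) v) (avoiding_words n k \<times> avoiding_words m k)"
    by (rule inj_on_subset[OF inj_on_append_shift])
  moreover have "(\<lambda>(u, v). u @ map ((+) n) v) ` (avoiding_words n k \<times> avoiding_words m k)
      \<subseteq> avoiding_words (n + m) k"
    by (auto intro: append_shift_mem_avoiding_words)
  ultimately have "card (avoiding_words n k \<times> avoiding_words m k) \<le> card (avoiding_words (n + m) k)"
    using finite_avoiding_words by (rule card_inj_on_le)
  then show ?thesis
    by (simp add: w_count_eq_card_avoiding_words card_cartesian_product)
qed

end
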